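(* Let $\epsilon\in(0,1)$, let $C$ be an integer with $C\ge\frac{\log(6/\epsilon)}{\log(1/(1-\epsilon/12))}+1$, and let $\epsilon'=\epsilon/(12C)$. Let $(t_1^{(\tau)},t_2^{(\tau)})\in[0,1]^2$, $\tau=1,\dots,C$, satisfy for every $\tau<C$ $$\big|t_1^{(\tau+1)}-\big(1-(1-t_1^{(\tau)})(1-t_2^{(\tau)})\big)\big|\le5\epsilon',\qquad \big|t_2^{(\tau+1)}-t_1^{(\tau)}t_2^{(\tau)}\big|\le\epsilon'.$$ Then $\big|\min(1,t_1^{(1)}+t_2^{(1)})-t_1^{(C)}\big|\le\epsilon$. Consequently, an addition gate $v\mapsto\min(1,v_j+v_k)$ can be simulated to within error $\epsilon$ by $O(\log(1/\epsilon)/\epsilon)$ gates each computing either $v\mapsto 1-v_j$ or $v\mapsto v_jv_k$, each satisfied up to error $\epsilon'=O(\epsilon^2)$. *)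

theory Defs
  imports Complex_Main
begin

end

theory Submission
  imports Defs
begin

text \<open>
  The potential \<open>m = min (1 - t\<^sub>1) t\<^sub>2\<close> measures how far the pair is from a state
  \<open>(t\<^sub>1, t\<^sub>2)\<close> with \<open>t\<^sub>1 = 1\<close> or \<open>t\<^sub>2 = 0\<close>, in which \<open>t\<^sub>1 = min 1 (t\<^sub>1 + t\<^sub>2)\<close>.
  An exact step maps \<open>(1 - t\<^sub>1, t\<^sub>2)\<close> to \<open>((1 - t\<^sub>1)(1 - t\<^sub>2), t\<^sub>1 t\<^sub>2)\<close>, so \<open>m\<close> shrinks by a factor
  \<open>1 - m\<close>; hence it decays geometrically by \<open>1 - \<epsilon>/4\<close> until it drops below \<open>\<epsilon>/4\<close>, and the
  choice of \<open>C\<close> makes it at most \<open>\<epsilon>/2\<close> after \<open>C - 1\<close> noisy steps.  Meanwhile the exact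
  step preserves \<open>t\<^sub>1 + t\<^sub>2\<close>, so the sum drifts by at most \<open>6\<epsilon>' (C - 1) \<le> \<epsilon>/2\<close>.
\<close>

lemma min_cross_products_le:
  fixes u b :: real
  assumes "0 \<le> u" "0 \<le> b"
  shows "min (u * (1 - b)) (b * (1 - u)) \<le> min u b * (1 - min u b)"
proof (cases "u \<le> b")
  case True
  then have "u * (1 - b) \<le> u * (1 - u)" using assms by (simp add: mult_left_mono)
  then show ?thesis using True by (simp add: min_def)
next
  case False
  then have "b * (1 - u) \<le> b * (1 - b)" using assms by (simp add: mult_left_mono)
  then show ?thesis using False by (simp add: min_def)
qed

lemma mult_one_minus_le_max:
  fixes v \<theta> :: real
  assumes "0 \<le> v" "v \<le> 1"
  shows "v * (1 - v) \<le> max ((1 - \<theta>) * v) \<theta>"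
proof (cases "\<theta> \<le> v")
  case True
  then have "v * (1 - v) \<le> v * (1 - \<theta>)" using assms by (simp add: mult_left_mono)
  then show ?thesis by (simp add: mult.commute)
next
  case False
  have "v * (1 - v) \<le> v" using assms by (simp add: mult_left_le)
  then show ?thesis using False by simp
qed

lemma potential_step_le:
  fixes a b a' b' \<delta> \<theta> :: real
  assumes "0 \<le> a" "a \<le> 1" "0 \<le> b" "b \<le> 1"
    and "\<bar>a' - (1 - (1 - a) * (1 - b))\<bar> \<le> 5 * \<delta>" and "\<bar>b' - a * b\<bar> \<le> \<delta>"
  shows "min (1 - a') b' \<le> max ((1 - \<theta>) * min (1 - a) b) \<theta> + 5 * \<delta>"
proof -
  have "0 \<le> \<delta>" using assms(6) by (rule order_trans[OF abs_ge_zero])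
  then have "1 - a' \<le> (1 - a) * (1 - b) + 5 * \<delta>" "b' \<le> b * (1 - (1 - a)) + 5 * \<delta>"
    using assms(5,6) by (simp_all add: abs_le_iff algebra_simps)
  then have "min (1 - a') b' \<le> min ((1 - a) * (1 - b)) (b * (1 - (1 - a))) + 5 * \<delta>"
    by (auto simp: min_def)
  also have "min ((1 - a) * (1 - b)) (b * (1 - (1 - a))) \<le> min (1 - a) b * (1 - min (1 - a) b)"
    using min_cross_products_le[of "1 - a" b] assms by simp
  also have "\<dots> \<le> max ((1 - \<theta>) * min (1 - a) b) \<theta>"
    using assms by (intro mult_one_minus_le_max) auto
  finally show ?thesis by simp
qed

lemma sum_change_le:
  fixes a b a' b' \<delta> :: real
  assumes "\<bar>a' - (1 - (1 - a) * (1 - b))\<bar> \<le> 5 * \<delta>" and "\<bar>b' - a * b\<bar> \<le> \<delta>"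
  shows "\<bar>(a' + b') - (a + b)\<bar> \<le> 6 * \<delta>"
  using assms by (simp add: abs_le_iff algebra_simps)

lemma min_one_add_error:
  fixes a b s :: real
  assumes "0 \<le> a" "a \<le> 1" "0 \<le> b" "b \<le> 1"
  shows "\<bar>min 1 s - a\<bar> \<le> \<bar>a + b - s\<bar> + min (1 - a) b"
  using assms by (auto simp: min_def abs_if)

lemma noisy_contraction_bound:
  fixes x :: "nat \<Rightarrow> real" and r c e :: real
  assumes "0 \<le> r" "r < 1" "0 \<le> c" "0 \<le> e" "x 0 \<le> 1"
    and step: "\<And>k. k < n \<Longrightarrow> x (Suc k) \<le> max (r * x k) c + e"
  shows "k \<le> n \<Longrightarrow> x k \<le> max (r ^ k) c + e / (1 - r)"
proof (induction k)
  case 0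
  have "0 \<le> e / (1 - r)" using assms by simp
  then show ?case using assms(5) by simp
next
  case (Suc k)
  define D where "D = e / (1 - r)"
  have D_fix: "r * D + e = D" using assms(2) by (simp add: D_def field_simps)
  have "0 \<le> D" using assms by (simp add: D_def)
  have "r * x k \<le> r * (max (r ^ k) c + D)"
    using Suc assms(1) by (simp add: D_def mult_left_mono)
  also have "\<dots> \<le> max (r ^ Suc k) c + r * D"
    using assms(1-3) mult_left_le_one_le[of c r] by (simp add: distrib_left max_mult_distrib_left)
  finally have "max (r * x k) c \<le> max (r ^ Suc k) c + r * D"
    using \<open>0 \<le> D\<close> assms(1) by (intro max.boundedI) (simp_all add: add_increasing2)
  then have "x (Suc k) \<le> max (r ^ Suc k) c + r * D + e"
    using Suc.prems by (intro order_trans[OF step[of k] add_right_mono]) auto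
  then show ?case using D_fix by (simp add: D_def)
qed

lemma drift_le_steps:
  fixes s :: "nat \<Rightarrow> real"
  assumes "\<And>k. k < n \<Longrightarrow> \<bar>s (Suc k) - s k\<bar> \<le> d"
  shows "\<bar>s n - s 0\<bar> \<le> real n * d"
  using assms
proof (induction n)
  case (Suc n)
  then have "\<bar>s n - s 0\<bar> \<le> real n * d" "\<bar>s (Suc n) - s n\<bar> \<le> d" by simp_all
  then show ?case by (simp add: algebra_simps)
qed simp

lemma noisy_addition_error:
  fixes a b :: "nat \<Rightarrow> real" and \<delta> \<theta> :: real
  assumes "0 < \<theta>" "\<theta> \<le> 1" "0 \<le> \<delta>"
    and range: "\<And>k. k \<le> n \<Longrightarrow> 0 \<le> a k \<and> a k \<le> 1 \<and> 0 \<le> b k \<and> b k \<le> 1"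
    and step_a: "\<And>k. k < n \<Longrightarrow> \<bar>a (Suc k) - (1 - (1 - a k) * (1 - b k))\<bar> \<le> 5 * \<delta>"
    and step_b: "\<And>k. k < n \<Longrightarrow> \<bar>b (Suc k) - a k * b k\<bar> \<le> \<delta>"
  shows "\<bar>min 1 (a 0 + b 0) - a n\<bar> \<le> real n * (6 * \<delta>) + max ((1 - \<theta>) ^ n) \<theta> + 5 * \<delta> / \<theta>"
proof -
  have "min (1 - a n) (b n) \<le> max ((1 - \<theta>) ^ n) \<theta> + 5 * \<delta> / (1 - (1 - \<theta>))"
  proof (rule noisy_contraction_bound[where x = "\<lambda>k. min (1 - a k) (b k)"])
    show "min (1 - a (Suc k)) (b (Suc k)) \<le> max ((1 - \<theta>) * min (1 - a k) (b k)) \<theta> + 5 * \<delta>"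
      if "k < n" for k
      using range[of k] step_a[OF that] step_b[OF that] that by (intro potential_step_le) auto
    show "min (1 - a 0) (b 0) \<le> 1" using range[OF le0] by (simp add: min_le_iff_disj)
  qed (use assms in auto)
  moreover have "\<bar>(a n + b n) - (a 0 + b 0)\<bar> \<le> real n * (6 * \<delta>)"
    using step_a step_b by (intro drift_le_steps sum_change_le) auto
  ultimately show ?thesis
    using min_one_add_error[of "a n" "b n" "a 0 + b 0"] range[of n] by simp
qed

lemma ln_inverse_one_minus_le:
  fixes x :: real
  assumes "0 \<le> x" "x < 1"
  shows "ln (1 / (1 - x)) \<le> x / (1 - x)"
proof -
  have "ln (1 / (1 - x)) \<le> 1 / (1 - x) - 1" using assms by (intro ln_le_minus_one) simp
  also have "\<dots> = x / (1 - x)" using assms by (simp add: field_simps)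
  finally show ?thesis .
qed

lemma power_le_of_ln_bound:
  fixes q y :: real
  assumes "0 < q" "q < 1" "0 < y" "ln (1 / y) / ln (1 / q) \<le> real n"
  shows "q ^ n \<le> y"
proof -
  have "0 < ln (1 / q)" using assms by simp
  then have "ln (1 / y) \<le> ln ((1 / q) ^ n)"
    using assms by (simp add: pos_divide_le_eq ln_realpow mult.commute del: power_one_over)
  then have "1 / y \<le> 1 / q ^ n"
    using assms by (simp add: power_one_over)
  then show ?thesis using assms by (simp add: field_simps)
qed

lemma gate_count_bounds:
  fixes \<epsilon> :: real and C :: nat
  assumes "0 < \<epsilon>" "\<epsilon> < 1"
    and C_bound: "real C \<ge> ln (6 / \<epsilon>) / ln (1 / (1 - \<epsilon> / 12)) + 1"
  shows "(1 - \<epsilon> / 12) ^ (C - 1) \<le> \<epsilon> / 6" and "11 \<le> real C * \<epsilon>"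
proof -
  define q where "q = 1 - \<epsilon> / 12"
  have q: "0 < q" "q < 1" using assms by (auto simp: q_def)
  have "exp 1 \<le> (3::real)" by (rule exp_le)
  also have "3 \<le> 6 / \<epsilon>" using assms by (simp add: field_simps)
  finally have "exp 1 \<le> 6 / \<epsilon>" .
  then have ln6: "1 \<le> ln (6 / \<epsilon>)" using assms by (simp add: ln_ge_iff)
  have "ln (1 / q) \<le> (\<epsilon> / 12) / q"
    using ln_inverse_one_minus_le[of "\<epsilon> / 12"] assms by (simp add: q_def)
  also have "\<dots> \<le> (\<epsilon> / 12) / (11 / 12)"
    using assms by (intro divide_left_mono) (auto simp: q_def)
  finally have lnq: "0 < ln (1 / q)" "ln (1 / q) \<le> \<epsilon> / 11" using q by simp_all
  have C1: "ln (6 / \<epsilon>) / ln (1 / q) \<le> real C - 1" using C_bound by (simp add: q_def)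
  moreover have "0 \<le> ln (6 / \<epsilon>) / ln (1 / q)" using ln6 lnq by (intro divide_nonneg_pos) linarith+
  ultimately have "1 \<le> real C" by linarith
  then show "q ^ (C - 1) \<le> \<epsilon> / 6"
    using C1 q assms by (intro power_le_of_ln_bound) (auto simp: of_nat_diff)
  have "11 / \<epsilon> \<le> 1 / ln (1 / q)" using lnq assms by (simp add: field_simps)
  also have "\<dots> \<le> ln (6 / \<epsilon>) / ln (1 / q)" using ln6 lnq by (simp add: divide_right_mono)
  finally have "11 / \<epsilon> \<le> real C" using C1 by linarith
  then show "11 \<le> real C * \<epsilon>" using assms by (simp add: pos_divide_le_eq)
qed

theorem mainTheorem20:
  fixes \<epsilon> :: real and C :: nat and t1 t2 :: "nat \<Rightarrow> real"
  assumes eps: "0 < \<epsilon>" "\<epsilon> < 1"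
    and C_bound: "real C \<ge> ln (6 / \<epsilon>) / ln (1 / (1 - \<epsilon> / 12)) + 1"
    and range1: "\<And>\<tau>. 1 \<le> \<tau> \<Longrightarrow> \<tau> \<le> C \<Longrightarrow> 0 \<le> t1 \<tau> \<and> t1 \<tau> \<le> 1"
    and range2: "\<And>\<tau>. 1 \<le> \<tau> \<Longrightarrow> \<tau> \<le> C \<Longrightarrow> 0 \<le> t2 \<tau> \<and> t2 \<tau> \<le> 1"
    and step1: "\<And>\<tau>. 1 \<le> \<tau> \<Longrightarrow> \<tau> < C \<Longrightarrow>
       \<bar>t1 (\<tau> + 1) - (1 - (1 - t1 \<tau>) * (1 - t2 \<tau>))\<bar> \<le> 5 * (\<epsilon> / (12 * real C))"
    and step2: "\<And>\<tau>. 1 \<le> \<tau> \<Longrightarrow> \<tau> < C \<Longrightarrow>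
       \<bar>t2 (\<tau> + 1) - t1 \<tau> * t2 \<tau>\<bar> \<le> \<epsilon> / (12 * real C)"
  shows "\<bar>min 1 (t1 1 + t2 1) - t1 C\<bar> \<le> \<epsilon>"
proof -
  define \<delta> where "\<delta> = \<epsilon> / (12 * real C)"
  have C_large: "11 \<le> real C * \<epsilon>" and "(1 - \<epsilon> / 12) ^ (C - 1) \<le> \<epsilon> / 6"
    using gate_count_bounds[OF eps C_bound] by simp_all
  moreover have "(1 - \<epsilon> / 4) ^ (C - 1) \<le> (1 - \<epsilon> / 12) ^ (C - 1)"
    using eps by (intro power_mono) auto
  ultimately have decay: "max ((1 - \<epsilon> / 4) ^ (C - 1)) (\<epsilon> / 4) \<le> \<epsilon> / 4" using eps by simp
  have C: "Suc (C - 1) = C" using C_large eps by (cases C) auto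
  have noise: "5 * \<delta> / (\<epsilon> / 4) \<le> \<epsilon> / 4"
    using C_large C eps by (simp add: \<delta>_def field_simps)
  have drift: "real (C - 1) * (6 * \<delta>) \<le> \<epsilon> / 2"
    using C eps by (simp add: \<delta>_def field_simps)
  have "\<bar>min 1 (t1 1 + t2 1) - t1 C\<bar>
      \<le> real (C - 1) * (6 * \<delta>) + max ((1 - \<epsilon> / 4) ^ (C - 1)) (\<epsilon> / 4) + 5 * \<delta> / (\<epsilon> / 4)"
    using noisy_addition_error[of "\<epsilon> / 4" \<delta> "C - 1" "\<lambda>k. t1 (Suc k)" "\<lambda>k. t2 (Suc k)"]
      range1 range2 step1 step2 eps C by (simp add: \<delta>_def)
  then show ?thesis using decay noise drift by linarith
qed

end
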